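(* Let $\mathscr{D}$ be a nonnegative integer-valued random variable with $\mathbb{P}(\mathscr{D}>t)=\mathcal{L}(t)t^{-\gamma}$, $\mathcal{L}$ slowly varying, $1<\gamma<2$, $\mu=\mathbb{E}[\mathscr D]$, and let $\kappa=(\gamma-1)/(1+\gamma)$. Let $D_1,\dots,D_n$ be i.i.d. copies, $L_n=\sum_iD_i$, $B_n(\varepsilon)=[\varepsilon\sqrt{\mu n},\sqrt{\mu n}/\varepsilon]$, \[ g_{n,\varepsilon}(x,y,z)=\big(1-e^{-xy/L_n}\big)\big(1-e^{-yz/L_n}\big)\big(1-e^{-zx/L_n}\big)\mathbf 1\{x,y,z\in B_n(\varepsilon)\}, \] \[ f_{n,\varepsilon}(x,y,z)=\big(1-e^{-xy/(\mu n)}\big)\big(1-e^{-yz/(\mu n)}\big)\big(1-e^{-zx/(\mu n)}\big)\mathbf 1\{x,y,z\in B_n(\varepsilon)\}. \] Then for all $\varepsilon>0$ and $\delta<\kappa$, \[ n^{\frac{3\gamma}2-3+\delta}\Big|\sum_{1\le i<j<k\le n}\big(g_{n,\varepsilon}(D_i,D_j,D_k)-f_{n,\varepsilon}(D_i,D_j,D_k)\big)\Big|\to0\text{ in probability}. \] *)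

theory Defs
  imports "HOL-Probability.Probability"
begin

definition slowly_varying :: "(real \<Rightarrow> real) \<Rightarrow> bool" where
  "slowly_varying L \<longleftrightarrow> L \<in> borel_measurable borel \<and>
     (\<forall>\<^sub>F t in at_top. L t > 0) \<and>
     (\<forall>a>0. ((\<lambda>t. L (a * t) / L t) \<longlongrightarrow> 1) at_top)"

definition conv_prob_zero :: "'a measure \<Rightarrow> (nat \<Rightarrow> 'a \<Rightarrow> real) \<Rightarrow> bool" where
  "conv_prob_zero M X \<longleftrightarrow>
     (\<forall>e>0. ((\<lambda>n. measure M {\<omega> \<in> space M. \<bar>X n \<omega>\<bar> > e}) \<longlonglongrightarrow> 0))"

definition Bwin :: "real \<Rightarrow> nat \<Rightarrow> real \<Rightarrow> real set" where
  "Bwin \<mu> n \<epsilon> = {\<epsilon> * sqrt (\<mu> * real n) .. sqrt (\<mu> * real n) / \<epsilon>}"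

text \<open>g and f with normalisation N (N = L_n for g, N = mu n for f).\<close>
definition tri_kernel :: "real \<Rightarrow> real \<Rightarrow> nat \<Rightarrow> real \<Rightarrow> real \<Rightarrow> real \<Rightarrow> real \<Rightarrow> real" where
  "tri_kernel N \<mu> n \<epsilon> x y z =
     (1 - exp (- (x * y) / N)) * (1 - exp (- (y * z) / N)) * (1 - exp (- (z * x) / N)) *
     (if x \<in> Bwin \<mu> n \<epsilon> \<and> y \<in> Bwin \<mu> n \<epsilon> \<and> z \<in> Bwin \<mu> n \<epsilon> then 1 else 0)"

end

theory Submission
  imports Defs
begin

text \<open>
  On the window \<open>B\<^sub>n(\<epsilon>)\<close> every product \<open>x y\<close> is at most \<open>\<mu> n / \<epsilon>\<^sup>2\<close>, so replacing \<open>L\<^sub>n\<close>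
  by \<open>\<mu> n\<close> changes each factor \<open>1 - exp(-x y / N)\<close> by \<open>O(|L\<^sub>n - \<mu> n| / (\<mu> n))\<close>. Only triples
  of indices with all \<open>D\<^sub>i \<ge> \<epsilon> sqrt(\<mu> n)\<close> contribute, so the sum is
  \<open>O(|L\<^sub>n / (\<mu> n) - 1| K\<^sub>n\<^sup>3)\<close>, where \<open>K\<^sub>n\<close> counts these indices.

  Potter's bound gives finite moments of every order \<open>p < \<gamma>\<close>. Truncating the \<open>D\<^sub>i\<close> at
  \<open>n^\<alpha>\<close>, Chebyshev's inequality for the bounded parts and Markov's for the excesses give
  \<open>|L\<^sub>n - \<mu> n| \<le> \<mu> n^(1 - \<theta>)\<close> with high probability when \<open>\<theta> < \<alpha> (p - 1)\<close> and
  \<open>\<alpha> < 1 - 2 \<theta>\<close>; Markov's inequality gives \<open>K\<^sub>n \<le> n^q\<close> with high probability when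
  \<open>q > 1 - p / 2\<close>. The weighted sum is then \<open>O(n^(3\<gamma>/2 - 3 + \<delta> - \<theta> + 3 q))\<close>, and for \<open>p\<close>
  close to \<open>\<gamma>\<close> the exponents can be chosen to make this vanish whenever
  \<open>\<delta> < (\<gamma> - 1) / (2 \<gamma> - 1)\<close>, a condition implied by \<open>\<delta> < \<kappa>\<close>.
\<close>

section \<open>Regularly varying tails\<close>

lemma ex_dyadic_bracket:
  fixes x :: real
  assumes "1 \<le> x"
  obtains j :: nat where "2 ^ j \<le> x" "x < 2 ^ Suc j"
proof -
  obtain k :: nat where "x < 2 ^ k" using real_arch_pow[of 2 x] by auto
  then have "\<exists>j. \<not> x < 2 ^ j \<and> x < 2 ^ Suc j"
    using assms by (intro exists_least_lemma) auto
  then show ?thesis using that by (auto simp: not_less)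
qed

lemma slowly_varying_doubling:
  assumes "slowly_varying L" and "\<eta> > 0"
  obtains T where "T \<ge> 1" "L T > 0" "\<And>k::nat. L (2 ^ k * T) \<le> (2 powr \<eta>) ^ k * L T"
proof -
  have lim: "((\<lambda>t. L (2 * t) / L t) \<longlongrightarrow> 1) at_top" and pos: "\<forall>\<^sub>F t in at_top. L t > 0"
    using assms(1) unfolding slowly_varying_def by auto
  have "\<forall>\<^sub>F t in at_top. L (2 * t) / L t < 2 powr \<eta>"
    using order_tendstoD(2)[OF lim] assms(2) by simp
  with pos have "\<forall>\<^sub>F t in at_top. L t > 0 \<and> L (2 * t) < 2 powr \<eta> * L t"
    by eventually_elim (simp add: divide_less_eq)
  then obtain T0 where T0: "\<And>t. t \<ge> T0 \<Longrightarrow> L t > 0 \<and> L (2 * t) < 2 powr \<eta> * L t"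
    unfolding eventually_at_top_linorder by blast
  define T where "T = max T0 1"
  have "L (2 ^ k * T) \<le> (2 powr \<eta>) ^ k * L T" for k :: nat
  proof (induction k)
    case (Suc k)
    have "T \<le> 2 ^ k * T"
      using mult_le_cancel_right1[of T "2 ^ k"] by (simp add: T_def)
    then have "T0 \<le> 2 ^ k * T" by (simp add: T_def)
    then have "L (2 * (2 ^ k * T)) \<le> 2 powr \<eta> * L (2 ^ k * T)"
      using T0 by fastforce
    also have "\<dots> \<le> 2 powr \<eta> * ((2 powr \<eta>) ^ k * L T)"
      using Suc.IH by simp
    finally show ?case by (simp add: mult.assoc)
  qed simp
  moreover have "T \<ge> 1" "L T > 0" using T0[of T] by (auto simp: T_def)
  ultimately show ?thesis using that by blast
qed

lemma slowly_varying_tail_powr_bound_at_top: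
  fixes F L :: "real \<Rightarrow> real" and \<beta> \<gamma> :: real
  assumes antimono: "\<And>s t. 0 < s \<Longrightarrow> s \<le> t \<Longrightarrow> F t \<le> F s"
    and "slowly_varying L"
    and F_eq: "\<And>t. t > 0 \<Longrightarrow> F t = L t * t powr (- \<gamma>)"
    and \<beta>: "0 < \<beta>" "\<beta> < \<gamma>"
  obtains T C where "T \<ge> 1" "\<And>t. T \<le> t \<Longrightarrow> F t \<le> C * t powr (- \<beta>)"
proof -
  obtain T where T: "T \<ge> 1" "L T > 0"
    and grow: "\<And>k::nat. L (2 ^ k * T) \<le> (2 powr (\<gamma> - \<beta>)) ^ k * L T"
    using slowly_varying_doubling[OF assms(2)] \<beta> by (metis diff_gt_0_iff_gt)
  have "F t \<le> L T * T powr (- \<gamma>) * (2 * T) powr \<beta> * t powr (- \<beta>)" if "T \<le> t" for t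
  proof -
    have "1 \<le> t / T" using that T by simp
    then obtain k :: nat where k: "2 ^ k \<le> t / T" "t / T < 2 ^ Suc k"
      by (rule ex_dyadic_bracket)
    have lo: "2 ^ k * T \<le> t" and hi: "t / (2 * T) \<le> 2 ^ k"
      using k T by (auto simp: field_simps)
    have pow: "(2 powr (\<gamma> - \<beta>)) ^ k * (2 ^ k * T) powr (- \<gamma>) = (2 ^ k) powr (- \<beta>) * T powr (- \<gamma>)"
      using T by (simp add: powr_realpow[symmetric] powr_powr powr_mult powr_add[symmetric]
          mult.commute mult.left_commute algebra_simps)
    have "F t \<le> F (2 ^ k * T)" using antimono lo T by simp
    also have "\<dots> = L (2 ^ k * T) * (2 ^ k * T) powr (- \<gamma>)" using F_eq T by simp
    also have "\<dots> \<le> (2 powr (\<gamma> - \<beta>)) ^ k * L T * (2 ^ k * T) powr (- \<gamma>)"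
      using grow[of k] by (intro mult_right_mono) auto
    also have "\<dots> = L T * T powr (- \<gamma>) * (2 ^ k) powr (- \<beta>)"
      using pow by (simp add: algebra_simps)
    also have "\<dots> \<le> L T * T powr (- \<gamma>) * (t / (2 * T)) powr (- \<beta>)"
      using hi T that \<beta> by (intro mult_left_mono powr_mono2') auto
    also have "\<dots> = L T * T powr (- \<gamma>) * (2 * T) powr \<beta> * t powr (- \<beta>)"
      using that T by (simp add: powr_divide powr_minus field_simps)
    finally show ?thesis .
  qed
  then show ?thesis using that T(1) by blast
qed

lemma slowly_varying_tail_powr_bound:
  fixes F L :: "real \<Rightarrow> real" and \<beta> \<gamma> :: real
  assumes antimono: "\<And>s t. 0 < s \<Longrightarrow> s \<le> t \<Longrightarrow> F t \<le> F s"
    and le_one: "\<And>t. F t \<le> 1"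
    and "slowly_varying L"
    and F_eq: "\<And>t. t > 0 \<Longrightarrow> F t = L t * t powr (- \<gamma>)"
    and \<beta>: "0 < \<beta>" "\<beta> < \<gamma>"
  obtains C where "C > 0" "\<And>t. t > 0 \<Longrightarrow> F t \<le> C * t powr (- \<beta>)"
proof -
  obtain T C0 where T: "T \<ge> 1" and large: "\<And>t. T \<le> t \<Longrightarrow> F t \<le> C0 * t powr (- \<beta>)"
    using slowly_varying_tail_powr_bound_at_top[OF antimono assms(3) F_eq \<beta>] by blast
  have small: "F t \<le> T powr \<beta> * t powr (- \<beta>)" if "0 < t" "t < T" for t
  proof -
    have "1 = T powr \<beta> * T powr (- \<beta>)" using T by (simp add: powr_minus)
    also have "\<dots> \<le> T powr \<beta> * t powr (- \<beta>)"
      using that \<beta> by (intro mult_left_mono powr_mono2') auto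
    finally show ?thesis using le_one[of t] by linarith
  qed
  show ?thesis
  proof (rule that[of "max C0 (T powr \<beta>)"])
    show "max C0 (T powr \<beta>) > 0" using T by (simp add: less_max_iff_disj)
    show "F t \<le> max C0 (T powr \<beta>) * t powr (- \<beta>)" if "t > 0" for t
    proof (cases "t \<ge> T")
      case True
      have "C0 * t powr (- \<beta>) \<le> max C0 (T powr \<beta>) * t powr (- \<beta>)"
        by (intro mult_right_mono) auto
      then show ?thesis using large[OF True] by linarith
    next
      case False
      have "T powr \<beta> * t powr (- \<beta>) \<le> max C0 (T powr \<beta>) * t powr (- \<beta>)"
        by (intro mult_right_mono) auto
      then show ?thesis using small[of t] that False by linarith
    qed
  qed
qed

lemma nat_powr_le_dyadic_suminf:
  fixes k :: nat and p :: real
  assumes "0 < p"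
  shows "ennreal (real k powr p) \<le> (\<Sum>j. ennreal (2 powr (real (Suc j) * p)) * of_bool (2 ^ j \<le> real k))"
proof (cases "k = 0")
  case False
  then obtain j :: nat where j: "2 ^ j \<le> real k" "real k < 2 ^ Suc j"
    using ex_dyadic_bracket[of "real k"] by auto
  have "real k powr p \<le> (2 ^ Suc j) powr p"
    using j assms by (intro powr_mono2) auto
  also have "\<dots> = 2 powr (real (Suc j) * p)"
    by (simp add: powr_realpow[symmetric] powr_powr del: power_Suc)
  finally have "ennreal (real k powr p) \<le> ennreal (2 powr (real (Suc j) * p)) * of_bool (2 ^ j \<le> real k)"
    using j by (simp add: ennreal_leI)
  also have "\<dots> \<le> (\<Sum>j. ennreal (2 powr (real (Suc j) * p)) * of_bool (2 ^ j \<le> real k))"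
    using sum_le_suminf[OF summableI, of "{j}" "\<lambda>j. ennreal (2 powr (real (Suc j) * p)) * of_bool (2 ^ j \<le> real k)"]
    by (simp only: sum.insert_remove finite.emptyI empty_Diff sum.empty add_0_right) simp
  finally show ?thesis .
qed (use assms in simp)

lemma (in prob_space) dyadic_weighted_prob_ge_le:
  fixes X :: "'a \<Rightarrow> nat" and C \<beta> p :: real
  assumes [measurable]: "X \<in> measurable M (count_space UNIV)"
    and tail: "\<And>t. t > 0 \<Longrightarrow> prob {\<omega> \<in> space M. real (X \<omega>) > t} \<le> C * t powr (- \<beta>)"
  shows "2 powr (real (Suc j) * p) * prob {\<omega> \<in> space M. 2 ^ j \<le> real (X \<omega>)}
         \<le> C * 2 powr (p + \<beta>) * (2 powr (p - \<beta>)) ^ j"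
proof -
  have "{\<omega> \<in> space M. 2 ^ j \<le> real (X \<omega>)} \<subseteq> {\<omega> \<in> space M. real (X \<omega>) > 2 ^ j / 2}"
  proof
    fix \<omega> assume "\<omega> \<in> {\<omega> \<in> space M. 2 ^ j \<le> real (X \<omega>)}"
    moreover have "(2::real) ^ j / 2 < 2 ^ j" by simp
    ultimately show "\<omega> \<in> {\<omega> \<in> space M. real (X \<omega>) > 2 ^ j / 2}"
      unfolding mem_Collect_eq by linarith
  qed
  then have "prob {\<omega> \<in> space M. 2 ^ j \<le> real (X \<omega>)} \<le> prob {\<omega> \<in> space M. real (X \<omega>) > 2 ^ j / 2}"
    by (intro finite_measure_mono) auto
  also have "\<dots> \<le> C * (2 ^ j / 2) powr (- \<beta>)"
    by (rule tail) simp
  finally have "2 powr (real (Suc j) * p) * prob {\<omega> \<in> space M. 2 ^ j \<le> real (X \<omega>)}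
      \<le> 2 powr (real (Suc j) * p) * (C * (2 ^ j / 2) powr (- \<beta>))"
    by (intro mult_left_mono) auto
  also have "\<dots> = C * 2 powr (p + \<beta>) * (2 powr (p - \<beta>)) ^ j"
  proof -
    have "(2 ^ j / 2 :: real) = 2 powr (real j - 1)"
      by (simp add: powr_diff powr_realpow)
    then show ?thesis
      by (simp add: powr_realpow[symmetric] powr_powr powr_add[symmetric] algebra_simps)
  qed
  finally show ?thesis .
qed

lemma (in prob_space) integrable_powr_of_tail_bound:
  fixes X :: "'a \<Rightarrow> nat" and C \<beta> p :: real
  assumes [measurable]: "X \<in> measurable M (count_space UNIV)"
    and tail: "\<And>t. t > 0 \<Longrightarrow> prob {\<omega> \<in> space M. real (X \<omega>) > t} \<le> C * t powr (- \<beta>)"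
    and p: "0 < p" "p < \<beta>"
  shows "integrable M (\<lambda>\<omega>. real (X \<omega>) powr p)"
proof -
  define c where "c j = (2::real) powr (real (Suc j) * p)" for j :: nat
  define A where "A j = {\<omega> \<in> space M. 2 ^ j \<le> real (X \<omega>)}" for j :: nat
  define r where "r = (2::real) powr (p - \<beta>)"
  define K where "K = C * 2 powr (p + \<beta>)"
  have A_sets[measurable]: "A j \<in> sets M" for j
    unfolding A_def by measurable
  have "0 \<le> prob {\<omega> \<in> space M. real (X \<omega>) > 1}" by simp
  also have "\<dots> \<le> C" using tail[of 1] by simp
  finally have "C \<ge> 0" .
  have r: "0 < r" "r < 1"
    using p powr_less_mono[of "p - \<beta>" 0 2] by (auto simp: r_def)
  have term_le: "ennreal (c j) * emeasure M (A j) \<le> ennreal (K * r ^ j)" for j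
    using dyadic_weighted_prob_ge_le[OF assms(1) tail, where p=p and j=j]
    by (simp add: A_def c_def K_def r_def emeasure_eq_measure ennreal_mult'[symmetric] ennreal_leI)
  have "(\<integral>\<^sup>+\<omega>. ennreal (norm (real (X \<omega>) powr p)) \<partial>M)
      \<le> (\<integral>\<^sup>+\<omega>. (\<Sum>j. ennreal (c j) * indicator (A j) \<omega>) \<partial>M)"
    using nat_powr_le_dyadic_suminf[OF p(1)]
    by (intro nn_integral_mono) (simp add: A_def c_def indicator_def)
  also have "\<dots> = (\<Sum>j. ennreal (c j) * emeasure M (A j))"
    by (subst nn_integral_suminf) (auto simp: nn_integral_cmult_indicator)
  also have "\<dots> \<le> (\<Sum>j. ennreal (K * r ^ j))"
    by (intro suminf_le term_le) auto
  also have "\<dots> < \<infinity>"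
    using r \<open>C \<ge> 0\<close> by (simp add: K_def less_top[symmetric] ennreal_suminf_neq_top summable_geometric)
  finally show ?thesis by (subst integrable_iff_bounded) auto
qed

lemma of_nat_le_powr:
  fixes p :: real
  assumes "1 \<le> p"
  shows "real k \<le> real k powr p"
proof (cases "k = 0")
  case False
  then show ?thesis using powr_mono[OF assms, of "real k"] by simp
qed simp

lemma (in prob_space) integrable_of_powr_moment:
  fixes X :: "'a \<Rightarrow> nat"
  assumes [measurable]: "X \<in> measurable M (count_space UNIV)"
    and "integrable M (\<lambda>\<omega>. real (X \<omega>) powr p)" and "1 \<le> p"
  shows "integrable M (\<lambda>\<omega>. real (X \<omega>))"
  by (rule Bochner_Integration.integrable_bound[OF assms(2)])
     (use assms(3) of_nat_le_powr in \<open>auto intro!: AE_I2\<close>)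

section \<open>The kernels\<close>

lemma abs_exp_neg_diff_le:
  fixes u v :: real
  assumes "0 \<le> u" "0 \<le> v"
  shows "\<bar>exp (- u) - exp (- v)\<bar> \<le> \<bar>u - v\<bar>"
proof -
  have le: "exp (- a) - exp (- b) \<le> b - a" if "0 \<le> a" "a \<le> b" for a b :: real
  proof -
    have "1 - exp (a - b) \<le> b - a"
      using exp_ge_add_one_self[of "a - b"] by linarith
    then have "exp (- a) * (1 - exp (a - b)) \<le> exp (- a) * (b - a)"
      by (intro mult_left_mono) auto
    also have "\<dots> \<le> b - a"
      using that by (intro mult_left_le_one_le) auto
    finally show ?thesis by (simp add: algebra_simps exp_add[symmetric])
  qed
  show ?thesis
    using le[of u v] le[of v u] assms by (cases "u \<le> v") auto
qed

lemma abs_prod3_diff_le: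
  fixes a1 a2 a3 b1 b2 b3 :: real
  assumes "0 \<le> a2" "a2 \<le> 1" "0 \<le> a3" "a3 \<le> 1" "0 \<le> b1" "b1 \<le> 1" "0 \<le> b2" "b2 \<le> 1"
  shows "\<bar>a1 * a2 * a3 - b1 * b2 * b3\<bar> \<le> \<bar>a1 - b1\<bar> + \<bar>a2 - b2\<bar> + \<bar>a3 - b3\<bar>"
proof -
  have "a1 * a2 * a3 - b1 * b2 * b3 = (a1 - b1) * (a2 * a3) + (a2 - b2) * (b1 * a3) + (a3 - b3) * (b1 * b2)"
    by (simp add: algebra_simps)
  moreover have "\<bar>(a1 - b1) * (a2 * a3)\<bar> \<le> \<bar>a1 - b1\<bar>" "\<bar>(a2 - b2) * (b1 * a3)\<bar> \<le> \<bar>a2 - b2\<bar>"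
      "\<bar>(a3 - b3) * (b1 * b2)\<bar> \<le> \<bar>a3 - b3\<bar>"
    using assms by (auto simp: abs_mult intro!: mult_left_le mult_le_one)
  ultimately show ?thesis by linarith
qed

lemma abs_divide_diff_le:
  fixes w S N c :: real
  assumes "N > 0" "2 * S \<ge> N" "0 \<le> w" "w \<le> c * N"
  shows "\<bar>w / S - w / N\<bar> \<le> 2 * c * (\<bar>S - N\<bar> / N)"
proof -
  have S: "S > 0" using assms by linarith
  have "w / S - w / N = w * (N - S) / (S * N)"
    using S assms by (simp add: field_simps)
  then have "\<bar>w / S - w / N\<bar> = w * \<bar>S - N\<bar> / (S * N)"
    using S assms by (simp add: abs_mult abs_minus_commute)
  also have "\<dots> \<le> (c * N) * \<bar>S - N\<bar> / ((N / 2) * N)"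
    using S assms by (intro frac_le mult_right_mono mult_pos_pos) auto
  also have "\<dots> = 2 * c * (\<bar>S - N\<bar> / N)"
    using assms by (simp add: field_simps)
  finally show ?thesis .
qed

lemma abs_exp_neg_divide_diff_le:
  fixes w S N c :: real
  assumes "N > 0" "2 * S \<ge> N" "0 \<le> w" "w \<le> c * N"
  shows "\<bar>exp (- (w / S)) - exp (- (w / N))\<bar> \<le> 2 * c * (\<bar>S - N\<bar> / N)"
proof -
  have "0 < S" using assms by linarith
  then have "\<bar>exp (- (w / S)) - exp (- (w / N))\<bar> \<le> \<bar>w / S - w / N\<bar>"
    using assms by (intro abs_exp_neg_diff_le) auto
  also have "\<dots> \<le> 2 * c * (\<bar>S - N\<bar> / N)"
    using assms by (rule abs_divide_diff_le)
  finally show ?thesis .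
qed

lemma Bwin_nonneg:
  assumes "0 < \<epsilon>" "0 \<le> \<mu> * real n" "a \<in> Bwin \<mu> n \<epsilon>"
  shows "0 \<le> a"
proof -
  have "0 \<le> \<epsilon> * sqrt (\<mu> * real n)" using assms(1,2) by simp
  then show ?thesis using assms(3) by (simp add: Bwin_def)
qed

lemma Bwin_mult_le:
  assumes "0 < \<epsilon>" "0 \<le> \<mu> * real n" "a \<in> Bwin \<mu> n \<epsilon>" "b \<in> Bwin \<mu> n \<epsilon>"
  shows "a * b \<le> 1 / \<epsilon>\<^sup>2 * (\<mu> * real n)"
proof -
  have "a * b \<le> (sqrt (\<mu> * real n) / \<epsilon>) * (sqrt (\<mu> * real n) / \<epsilon>)"
    using assms Bwin_nonneg[OF assms(1,2)] by (intro mult_mono) (auto simp: Bwin_def)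
  also have "\<dots> = 1 / \<epsilon>\<^sup>2 * (\<mu> * real n)"
    using assms(2) by (simp add: power2_eq_square)
  finally show ?thesis .
qed

lemma tri_kernel_diff_le:
  fixes S \<mu> \<epsilon> x y z :: real and n :: nat
  defines "N \<equiv> \<mu> * real n"
  assumes N: "N > 0" "2 * S \<ge> N" and \<epsilon>: "\<epsilon> > 0"
  shows "\<bar>tri_kernel S \<mu> n \<epsilon> x y z - tri_kernel N \<mu> n \<epsilon> x y z\<bar>
         \<le> 6 / \<epsilon>\<^sup>2 * (\<bar>S - N\<bar> / N) * of_bool (x \<in> Bwin \<mu> n \<epsilon> \<and> y \<in> Bwin \<mu> n \<epsilon> \<and> z \<in> Bwin \<mu> n \<epsilon>)"
proof (cases "x \<in> Bwin \<mu> n \<epsilon> \<and> y \<in> Bwin \<mu> n \<epsilon> \<and> z \<in> Bwin \<mu> n \<epsilon>")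
  case True
  then have xyz: "x \<in> Bwin \<mu> n \<epsilon>" "y \<in> Bwin \<mu> n \<epsilon>" "z \<in> Bwin \<mu> n \<epsilon>" by auto
  define F where "F T a b = 1 - exp (- (a * b) / T)" for T a b :: real
  have F_bounds: "0 \<le> F T a b" "F T a b \<le> 1" if "0 \<le> a" "0 \<le> b" "0 \<le> T" for T a b
    using that by (auto simp: F_def)
  have F_diff: "\<bar>F S a b - F N a b\<bar> \<le> 2 / \<epsilon>\<^sup>2 * (\<bar>S - N\<bar> / N)"
    if "a \<in> Bwin \<mu> n \<epsilon>" "b \<in> Bwin \<mu> n \<epsilon>" for a b
  proof -
    have "0 \<le> a" "0 \<le> b"
      using Bwin_nonneg[OF \<epsilon> _ that(1)] Bwin_nonneg[OF \<epsilon> _ that(2)] N by (simp_all add: N_def)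
    then have "0 \<le> a * b" by simp
    moreover have "a * b \<le> 1 / \<epsilon>\<^sup>2 * N"
      using that N \<epsilon> Bwin_mult_le[of \<epsilon> \<mu> n a b] by (simp add: N_def)
    ultimately have "\<bar>exp (- (a * b / S)) - exp (- (a * b / N))\<bar> \<le> 2 * (1 / \<epsilon>\<^sup>2) * (\<bar>S - N\<bar> / N)"
      using N by (intro abs_exp_neg_divide_diff_le)
    moreover have "\<bar>F S a b - F N a b\<bar> = \<bar>exp (- (a * b / S)) - exp (- (a * b / N))\<bar>"
      by (simp add: F_def abs_minus_commute)
    ultimately show ?thesis by simp
  qed
  have nonneg: "0 \<le> x" "0 \<le> y" "0 \<le> z"
    using Bwin_nonneg[OF \<epsilon> _ xyz(1)] Bwin_nonneg[OF \<epsilon> _ xyz(2)] Bwin_nonneg[OF \<epsilon> _ xyz(3)] N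
    by (simp_all add: N_def)
  have "\<bar>tri_kernel S \<mu> n \<epsilon> x y z - tri_kernel N \<mu> n \<epsilon> x y z\<bar>
      = \<bar>F S x y * F S y z * F S z x - F N x y * F N y z * F N z x\<bar>"
    using True by (simp add: tri_kernel_def F_def)
  also have "\<dots> \<le> \<bar>F S x y - F N x y\<bar> + \<bar>F S y z - F N y z\<bar> + \<bar>F S z x - F N z x\<bar>"
    using nonneg N by (intro abs_prod3_diff_le F_bounds) auto
  also have "\<dots> \<le> 2 / \<epsilon>\<^sup>2 * (\<bar>S - N\<bar> / N) + 2 / \<epsilon>\<^sup>2 * (\<bar>S - N\<bar> / N) + 2 / \<epsilon>\<^sup>2 * (\<bar>S - N\<bar> / N)"
    by (intro add_mono F_diff xyz)
  finally show ?thesis using True by (simp add: mult.commute)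
qed (use N in \<open>auto simp: tri_kernel_def\<close>)

definition kernel_diff_sum :: "real \<Rightarrow> nat \<Rightarrow> real \<Rightarrow> (nat \<Rightarrow> real) \<Rightarrow> real" where
  "kernel_diff_sum \<mu> n \<epsilon> X = (\<Sum>(i, j, k) \<in> {(i, j, k). i < j \<and> j < k \<and> k < n}.
     tri_kernel (\<Sum>l<n. X l) \<mu> n \<epsilon> (X i) (X j) (X k) - tri_kernel (\<mu> * real n) \<mu> n \<epsilon> (X i) (X j) (X k))"

lemma abs_kernel_diff_sum_le:
  fixes X :: "nat \<Rightarrow> real" and \<mu> \<epsilon> :: real and n :: nat
  defines "N \<equiv> \<mu> * real n" and "S \<equiv> \<Sum>l<n. X l"
  assumes N: "N > 0" "2 * S \<ge> N" and \<epsilon>: "\<epsilon> > 0"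
  shows "\<bar>kernel_diff_sum \<mu> n \<epsilon> X\<bar>
         \<le> 6 / \<epsilon>\<^sup>2 * (\<bar>S - N\<bar> / N) * real (card {i. i < n \<and> \<epsilon> * sqrt N \<le> X i}) ^ 3"
proof -
  define T where "T = {(i, j, k). i < j \<and> j < k \<and> k < (n::nat)}"
  define A where "A = {i. i < n \<and> \<epsilon> * sqrt N \<le> X i}"
  define c where "c = 6 / \<epsilon>\<^sup>2 * (\<bar>S - N\<bar> / N)"
  have "T \<subseteq> {..<n} \<times> {..<n} \<times> {..<n}" by (auto simp: T_def)
  then have "finite T" by (rule finite_subset) auto
  have "finite A" by (auto simp: A_def)
  have term_le: "(case t of (i, j, k) \<Rightarrow>
        \<bar>tri_kernel S \<mu> n \<epsilon> (X i) (X j) (X k) - tri_kernel N \<mu> n \<epsilon> (X i) (X j) (X k)\<bar>)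
      \<le> c * of_bool (t \<in> A \<times> A \<times> A)" if "t \<in> T" for t
  proof -
    obtain i j k where t: "t = (i, j, k)" by (cases t)
    have "X l \<in> Bwin \<mu> n \<epsilon> \<Longrightarrow> l < n \<Longrightarrow> l \<in> A" for l
      by (simp add: A_def Bwin_def N_def)
    moreover have "i < n" "j < n" "k < n" using that by (auto simp: T_def t)
    ultimately have "of_bool (X i \<in> Bwin \<mu> n \<epsilon> \<and> X j \<in> Bwin \<mu> n \<epsilon> \<and> X k \<in> Bwin \<mu> n \<epsilon>)
        \<le> (of_bool (t \<in> A \<times> A \<times> A) :: real)" by (auto simp: t)
    moreover have "c \<ge> 0" using N by (simp add: c_def)
    ultimately show ?thesis
      using tri_kernel_diff_le[OF N[unfolded N_def] \<epsilon>, of "X i" "X j" "X k"]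
      unfolding c_def N_def t by (smt (verit) mult_left_mono prod.case)
  qed
  have "\<bar>kernel_diff_sum \<mu> n \<epsilon> X\<bar>
      \<le> (\<Sum>(i, j, k) \<in> T. \<bar>tri_kernel S \<mu> n \<epsilon> (X i) (X j) (X k) - tri_kernel N \<mu> n \<epsilon> (X i) (X j) (X k)\<bar>)"
    unfolding kernel_diff_sum_def T_def S_def N_def
    by (rule order.trans[OF sum_abs]) (simp add: case_prod_beta)
  also have "\<dots> \<le> (\<Sum>t \<in> T. c * of_bool (t \<in> A \<times> A \<times> A))"
    by (rule sum_mono) (rule term_le)
  also have "\<dots> = c * real (card (T \<inter> A \<times> A \<times> A))"
    using \<open>finite T\<close> by (simp add: sum_distrib_left[symmetric] sum_of_bool_eq)
  also have "\<dots> \<le> c * real (card (A \<times> A \<times> A))"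
    using \<open>finite A\<close> N by (intro mult_left_mono of_nat_mono card_mono) (auto simp: c_def)
  also have "\<dots> = c * real (card A) ^ 3"
    by (simp add: card_cartesian_product power3_eq_cube)
  finally show ?thesis unfolding c_def A_def .
qed

lemma weighted_kernel_diff_sum_le:
  fixes X :: "nat \<Rightarrow> real" and \<mu> \<epsilon> \<theta> q c :: real and n :: nat
  defines "N \<equiv> \<mu> * real n"
  assumes N: "0 < N" and \<epsilon>: "0 < \<epsilon>" and small: "real n powr (- \<theta>) \<le> 1 / 2"
    and S: "\<bar>(\<Sum>l<n. X l) - N\<bar> \<le> \<mu> * real n powr (1 - \<theta>)"
    and K: "real (card {i. i < n \<and> \<epsilon> * sqrt N \<le> X i}) \<le> real n powr q"
  shows "real n powr c * \<bar>kernel_diff_sum \<mu> n \<epsilon> X\<bar> \<le> 6 / \<epsilon>\<^sup>2 * real n powr (c - \<theta> + 3 * q)"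
proof -
  define S where "S = (\<Sum>l<n. X l)"
  have n: "0 < real n" using N by (simp add: N_def zero_less_mult_iff)
  have "\<mu> * real n powr (1 - \<theta>) = N * real n powr (- \<theta>)"
    using n by (simp add: N_def powr_diff powr_minus divide_inverse)
  then have rel: "\<bar>S - N\<bar> / N \<le> real n powr (- \<theta>)"
    using S N by (simp add: S_def divide_le_eq mult.commute)
  then have "\<bar>S - N\<bar> / N \<le> 1 / 2" using small by linarith
  then have "\<bar>S - N\<bar> \<le> N / 2" using N by (simp add: divide_le_eq)
  then have "2 * S \<ge> N" using abs_ge_minus_self[of "S - N"] by linarith
  then have "\<bar>kernel_diff_sum \<mu> n \<epsilon> X\<bar>
      \<le> 6 / \<epsilon>\<^sup>2 * (\<bar>S - N\<bar> / N) * real (card {i. i < n \<and> \<epsilon> * sqrt N \<le> X i}) ^ 3"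
    using abs_kernel_diff_sum_le[of \<mu> n X \<epsilon>] N \<epsilon> by (simp add: N_def S_def)
  also have "\<dots> \<le> 6 / \<epsilon>\<^sup>2 * real n powr (- \<theta>) * (real n powr q) ^ 3"
    using rel K N by (intro mult_mono power_mono) auto
  also have "\<dots> = 6 / \<epsilon>\<^sup>2 * real n powr (- \<theta> + 3 * q)"
    using n by (simp add: powr_realpow[symmetric] powr_powr powr_add[symmetric] mult.commute)
  finally have "real n powr c * \<bar>kernel_diff_sum \<mu> n \<epsilon> X\<bar>
      \<le> real n powr c * (6 / \<epsilon>\<^sup>2 * real n powr (- \<theta> + 3 * q))"
    by (intro mult_left_mono) auto
  also have "\<dots> = 6 / \<epsilon>\<^sup>2 * real n powr (c - \<theta> + 3 * q)"
    by (simp add: powr_add[symmetric] algebra_simps)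
  finally show ?thesis .
qed

definition trunc_le :: "real \<Rightarrow> nat \<Rightarrow> real" where
  "trunc_le b k = (if real k \<le> b then real k else 0)"

definition trunc_gt :: "real \<Rightarrow> nat \<Rightarrow> real" where
  "trunc_gt b k = (if real k \<le> b then 0 else real k)"

lemma trunc_le_plus_trunc_gt: "trunc_le b k + trunc_gt b k = real k"
  by (simp add: trunc_le_def trunc_gt_def)

lemma abs_trunc_le_le: "0 \<le> b \<Longrightarrow> \<bar>trunc_le b k\<bar> \<le> b"
  by (simp add: trunc_le_def)

lemma trunc_le_square_le: "0 \<le> b \<Longrightarrow> (trunc_le b k)\<^sup>2 \<le> b * real k"
  by (auto simp: trunc_le_def power2_eq_square intro: mult_right_mono)

lemma trunc_gt_nonneg: "0 \<le> trunc_gt b k"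
  by (simp add: trunc_gt_def)

lemma trunc_gt_le_powr:
  fixes b p :: real
  assumes "0 < b" "1 \<le> p"
  shows "trunc_gt b k \<le> real k powr p * b powr (1 - p)"
proof (cases "real k \<le> b")
  case False
  then have "1 \<le> (real k / b) powr (p - 1)"
    using assms by (intro ge_one_powr_ge_zero) auto
  then have "real k \<le> real k * (real k / b) powr (p - 1)"
    using False assms by simp
  also have "\<dots> = real k powr p * b powr (1 - p)"
    using False assms by (simp add: powr_divide powr_diff powr_minus divide_simps)
  finally show ?thesis using False by (simp add: trunc_gt_def)
qed (simp add: trunc_gt_def)

section \<open>Exponents and rates\<close>

text \<open>The roles of the exponents: \<open>p\<close> is the order of the moment used, \<open>n^\<alpha>\<close> the truncation
  level, \<open>\<mu> n^(1 - \<theta>)\<close> the tolerated deviation of \<open>L\<^sub>n\<close> and \<open>n^q\<close> the tolerated number of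
  \<open>D\<^sub>i \<ge> \<epsilon> sqrt(\<mu> n)\<close>.\<close>

lemma ex_exponents:
  fixes \<gamma> \<delta> :: real
  assumes \<gamma>: "1 < \<gamma>" "\<gamma> < 2" and \<delta>: "\<delta> < (\<gamma> - 1) / (1 + \<gamma>)"
  obtains p \<theta> \<alpha> q where "1 < p" "p < \<gamma>" "0 < \<theta>" "\<theta> < \<alpha> * (p - 1)"
    "\<alpha> < 1 - 2 * \<theta>" "1 - p / 2 < q" "3 * \<gamma> / 2 - 3 + \<delta> + 3 * q < \<theta>"
proof -
  define \<kappa> where "\<kappa> = (\<gamma> - 1) / (1 + \<gamma>)"
  define Q where "Q = (\<gamma> - 1) / (2 * \<gamma> - 1)"
  define d where "d = max \<delta> 0"
  define t where "t = min ((\<gamma> - 1) / 2) ((\<kappa> - d) / 5)"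
  define p where "p = \<gamma> - t"
  define A where "A = 3 * t / 2 + d"
  define B where "B = Q - t"
  define \<theta> where "\<theta> = (A + 2 * B) / 3"
  define r where "r = \<theta> / (p - 1)"
  define \<alpha> where "\<alpha> = (r + 1 - 2 * \<theta>) / 2"
  define q where "q = (3 - 3 * \<gamma> / 2 - d + (2 * A + B) / 3) / 3"
  have "\<kappa> > 0" using \<gamma> by (simp add: \<kappa>_def)
  then have d: "0 \<le> d" "d < \<kappa>" "\<delta> \<le> d" using \<delta> by (auto simp: d_def \<kappa>_def)
  have t: "0 < t" "2 * t \<le> \<gamma> - 1" "5 * t \<le> \<kappa> - d"
    using \<gamma> d by (auto simp: t_def min_def)
  have p: "1 < p" "p < \<gamma>" using t by (auto simp: p_def)
  have "(\<gamma> - 1) * (2 * \<gamma> - 1) < (\<gamma> - 1) * (1 + \<gamma>)"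
    using \<gamma> by (intro mult_strict_left_mono) auto
  then have "\<kappa> < Q" using \<gamma> by (simp add: \<kappa>_def Q_def divide_simps)
  then have AB: "0 < A" "A < B" using t d by (auto simp: A_def B_def)
  have "B \<le> (p - 1) / (2 * p - 1)"
  proof -
    have "(p - 1) / (2 * \<gamma> - 1) \<le> (p - 1) / (2 * p - 1)"
      using p t by (intro divide_left_mono) (auto simp: p_def)
    moreover have "(p - 1) / (2 * \<gamma> - 1) = Q - t / (2 * \<gamma> - 1)"
      by (simp add: Q_def p_def diff_divide_distrib)
    moreover have "t / (2 * \<gamma> - 1) \<le> t" using \<gamma> t by (simp add: divide_le_eq)
    ultimately show ?thesis unfolding B_def by linarith
  qed
  moreover have "\<theta> < B" using AB by (simp add: \<theta>_def)
  ultimately have "\<theta> < (p - 1) / (2 * p - 1)" by linarith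
  then have "\<theta> < (1 - 2 * \<theta>) * (p - 1)" using p by (simp add: less_divide_eq algebra_simps)
  then have r: "r < 1 - 2 * \<theta>" "\<theta> = r * (p - 1)" using p by (simp_all add: r_def divide_less_eq)
  show ?thesis
  proof (rule that)
    show "0 < \<theta>" using AB by (simp add: \<theta>_def)
    have "r < \<alpha>" using r by (simp add: \<alpha>_def)
    then show "\<theta> < \<alpha> * (p - 1)" using r(2) p by (simp add: mult_strict_right_mono)
    show "\<alpha> < 1 - 2 * \<theta>" using r by (simp add: \<alpha>_def)
    show "1 - p / 2 < q" using AB by (simp add: q_def p_def A_def field_simps)
    show "3 * \<gamma> / 2 - 3 + \<delta> + 3 * q < \<theta>" using AB d by (simp add: q_def \<theta>_def field_simps)
  qed (use p in auto)
qed

lemma tendsto_const_mult_powr_neg: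
  fixes c e :: real
  assumes "e < 0"
  shows "(\<lambda>n::nat. c * real n powr e) \<longlonglongrightarrow> 0"
  by (intro tendsto_mult_right_zero tendsto_neg_powr[OF assms] filterlim_real_sequentially)

lemma tendsto_count_bound:
  fixes m \<mu> \<epsilon> p q :: real
  assumes "\<mu> > 0" "\<epsilon> > 0" "1 - p / 2 < q"
  shows "(\<lambda>n. real n * (m / (\<epsilon> * sqrt (\<mu> * real n)) powr p) / real n powr q) \<longlonglongrightarrow> 0"
proof (rule Lim_transform_eventually)
  show "(\<lambda>n. m / (\<epsilon> powr p * \<mu> powr (p / 2)) * real n powr (1 - p / 2 - q)) \<longlonglongrightarrow> 0"
    using assms by (intro tendsto_const_mult_powr_neg) simp
  show "\<forall>\<^sub>F n in sequentially. m / (\<epsilon> powr p * \<mu> powr (p / 2)) * real n powr (1 - p / 2 - q)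
      = real n * (m / (\<epsilon> * sqrt (\<mu> * real n)) powr p) / real n powr q"
    using eventually_gt_at_top[of 0]
  proof eventually_elim
    case (elim n)
    have "(\<epsilon> * sqrt (\<mu> * real n)) powr p = \<epsilon> powr p * \<mu> powr (p / 2) * real n powr (p / 2)"
      using elim assms by (simp add: powr_half_sqrt[symmetric] powr_mult powr_powr)
    moreover have "real n powr (1 - p / 2 - q) = real n / real n powr (p / 2) / real n powr q"
      using elim by (simp add: powr_diff)
    ultimately show ?case using assms by (simp add: field_simps)
  qed
qed

lemma tendsto_truncation_bias_bound:
  fixes m \<mu> \<alpha> \<theta> p :: real
  assumes "\<mu> > 0" "\<theta> < \<alpha> * (p - 1)"
  shows "(\<lambda>n. real n * (m * (real n powr \<alpha>) powr (1 - p)) / (\<mu> * real n powr (1 - \<theta>) / 3)) \<longlonglongrightarrow> 0"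
proof (rule Lim_transform_eventually)
  show "(\<lambda>n. 3 * m / \<mu> * real n powr (\<theta> - \<alpha> * (p - 1))) \<longlonglongrightarrow> 0"
    using assms by (intro tendsto_const_mult_powr_neg) simp
  show "\<forall>\<^sub>F n in sequentially. 3 * m / \<mu> * real n powr (\<theta> - \<alpha> * (p - 1))
      = real n * (m * (real n powr \<alpha>) powr (1 - p)) / (\<mu> * real n powr (1 - \<theta>) / 3)"
    using eventually_gt_at_top[of 0]
  proof eventually_elim
    case (elim n)
    have "real n powr (\<theta> - \<alpha> * (p - 1)) = real n * (real n powr \<alpha>) powr (1 - p) / real n powr (1 - \<theta>)"
      using elim by (simp add: powr_powr powr_diff powr_add algebra_simps)
    then show ?case using assms by (simp add: field_simps)
  qed
qed

lemma tendsto_truncation_variance_bound: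
  fixes \<mu> \<alpha> \<theta> :: real
  assumes "\<mu> > 0" "\<alpha> < 1 - 2 * \<theta>"
  shows "(\<lambda>n. real n * (real n powr \<alpha> * \<mu>) / (\<mu> * real n powr (1 - \<theta>) / 3)\<^sup>2) \<longlonglongrightarrow> 0"
proof (rule Lim_transform_eventually)
  show "(\<lambda>n. 9 / \<mu> * real n powr (\<alpha> - 1 + 2 * \<theta>)) \<longlonglongrightarrow> 0"
    using assms by (intro tendsto_const_mult_powr_neg) simp
  show "\<forall>\<^sub>F n in sequentially. 9 / \<mu> * real n powr (\<alpha> - 1 + 2 * \<theta>)
      = real n * (real n powr \<alpha> * \<mu>) / (\<mu> * real n powr (1 - \<theta>) / 3)\<^sup>2"
    using eventually_gt_at_top[of 0]
  proof eventually_elim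
    case (elim n)
    have sq: "(real n powr (1 - \<theta>))\<^sup>2 = real n powr (2 - 2 * \<theta>)"
      using elim by (simp add: powr_realpow[symmetric] powr_powr algebra_simps)
    have "real n * real n powr \<alpha> = real n powr (1 + \<alpha>)"
      using elim by (simp add: powr_add)
    then have "real n * real n powr \<alpha> / (real n powr (1 - \<theta>))\<^sup>2 = real n powr (1 + \<alpha> - (2 - 2 * \<theta>))"
      unfolding sq by (simp only: powr_diff[of "real n" "1 + \<alpha>" "2 - 2 * \<theta>"])
    then have "real n powr (\<alpha> - 1 + 2 * \<theta>) = real n * real n powr \<alpha> / (real n powr (1 - \<theta>))\<^sup>2"
      by (simp add: algebra_simps)
    then show ?case using assms by (simp add: field_simps power2_eq_square)
  qed
qed

section \<open>Sums of i.i.d. variables\<close>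

lemma (in prob_space) expectation_square_sum_orthogonal:
  fixes Y :: "nat \<Rightarrow> 'a \<Rightarrow> real"
  assumes "finite I"
    and int: "\<And>i j. i \<in> I \<Longrightarrow> j \<in> I \<Longrightarrow> integrable M (\<lambda>\<omega>. Y i \<omega> * Y j \<omega>)"
    and orth: "\<And>i j. i \<in> I \<Longrightarrow> j \<in> I \<Longrightarrow> i \<noteq> j \<Longrightarrow> expectation (\<lambda>\<omega>. Y i \<omega> * Y j \<omega>) = 0"
  shows "expectation (\<lambda>\<omega>. (\<Sum>i\<in>I. Y i \<omega>)\<^sup>2) = (\<Sum>i\<in>I. expectation (\<lambda>\<omega>. (Y i \<omega>)\<^sup>2))"
proof -
  have "expectation (\<lambda>\<omega>. (\<Sum>i\<in>I. Y i \<omega>)\<^sup>2) = (\<Sum>i\<in>I. \<Sum>j\<in>I. expectation (\<lambda>\<omega>. Y i \<omega> * Y j \<omega>))"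
    using int by (simp add: power2_eq_square sum_product Bochner_Integration.integral_sum
        Bochner_Integration.integrable_sum)
  also have "\<dots> = (\<Sum>i\<in>I. expectation (\<lambda>\<omega>. Y i \<omega> * Y i \<omega>))"
  proof (rule sum.cong[OF refl])
    fix i assume "i \<in> I"
    then have "(\<Sum>j\<in>I. expectation (\<lambda>\<omega>. Y i \<omega> * Y j \<omega>))
        = expectation (\<lambda>\<omega>. Y i \<omega> * Y i \<omega>) + (\<Sum>j\<in>I - {i}. expectation (\<lambda>\<omega>. Y i \<omega> * Y j \<omega>))"
      using \<open>finite I\<close> by (intro sum.remove)
    also have "(\<Sum>j\<in>I - {i}. expectation (\<lambda>\<omega>. Y i \<omega> * Y j \<omega>)) = 0"
      using orth \<open>i \<in> I\<close> by (intro sum.neutral) auto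
    finally show "(\<Sum>j\<in>I. expectation (\<lambda>\<omega>. Y i \<omega> * Y j \<omega>)) = expectation (\<lambda>\<omega>. Y i \<omega> * Y i \<omega>)"
      by simp
  qed
  finally show ?thesis by (simp add: power2_eq_square)
qed

locale iid_nat_seq = prob_space M for M :: "'a measure" +
  fixes D :: "nat \<Rightarrow> 'a \<Rightarrow> nat"
  assumes D_measurable[measurable]: "\<And>i. D i \<in> measurable M (count_space UNIV)"
    and D_indep: "indep_vars (\<lambda>_. count_space UNIV) D UNIV"
    and D_distr: "\<And>i. distr M (count_space UNIV) (D i) = distr M (count_space UNIV) (D 0)"
begin

lemma integrable_comp_D_iff:
  "integrable M (\<lambda>\<omega>. h (D i \<omega>) :: real) \<longleftrightarrow> integrable M (\<lambda>\<omega>. h (D 0 \<omega>))"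
  using integrable_distr_eq[of "D i" M "count_space UNIV" h]
    integrable_distr_eq[of "D 0" M "count_space UNIV" h]
  by (simp add: D_distr[of i])

lemma expectation_comp_D:
  "expectation (\<lambda>\<omega>. h (D i \<omega>) :: real) = expectation (\<lambda>\<omega>. h (D 0 \<omega>))"
  using integral_distr[of "D i" M "count_space UNIV" h] integral_distr[of "D 0" M "count_space UNIV" h]
  by (simp add: D_distr[of i])

lemma prob_comp_D: "prob {\<omega> \<in> space M. P (D i \<omega>)} = prob {\<omega> \<in> space M. P (D 0 \<omega>)}"
proof -
  have "prob {\<omega> \<in> space M. P (D l \<omega>)} = measure (distr M (count_space UNIV) (D l)) {k. P k}" for l
    by (subst measure_distr) (auto intro!: arg_cong[where f="measure M"])
  then show ?thesis by (simp add: D_distr[of i])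
qed

lemma expectation_mult_comp_D:
  fixes h :: "nat \<Rightarrow> real"
  assumes "i \<noteq> j" and "integrable M (\<lambda>\<omega>. h (D 0 \<omega>))"
  shows "expectation (\<lambda>\<omega>. h (D i \<omega>) * h (D j \<omega>)) =
         expectation (\<lambda>\<omega>. h (D i \<omega>)) * expectation (\<lambda>\<omega>. h (D j \<omega>))"
proof -
  have "indep_vars (\<lambda>_. borel) (\<lambda>l \<omega>. h (D l \<omega>)) {i, j}"
    by (rule indep_vars_subset[OF indep_vars_compose2[OF D_indep]]) auto
  then have "expectation (\<lambda>\<omega>. \<Prod>l\<in>{i, j}. h (D l \<omega>)) = (\<Prod>l\<in>{i, j}. expectation (\<lambda>\<omega>. h (D l \<omega>)))"
    using assms(2) integrable_comp_D_iff by (intro indep_vars_lebesgue_integral) auto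
  then show ?thesis using assms(1) by simp
qed

lemma integrable_bounded_comp_D:
  fixes h :: "nat \<Rightarrow> real"
  assumes "\<And>k. \<bar>h k\<bar> \<le> B"
  shows "integrable M (\<lambda>\<omega>. h (D i \<omega>))"
  by (rule integrable_const_bound[where B=B]) (use assms in auto)

lemma expectation_centered_sum_square_le:
  fixes h :: "nat \<Rightarrow> real"
  assumes bnd: "\<And>k. \<bar>h k\<bar> \<le> B"
  shows "expectation (\<lambda>\<omega>. (\<Sum>i<n. h (D i \<omega>) - expectation (\<lambda>\<omega>. h (D 0 \<omega>)))\<^sup>2)
          \<le> real n * expectation (\<lambda>\<omega>. (h (D 0 \<omega>))\<^sup>2)"
proof -
  define c where "c = expectation (\<lambda>\<omega>. h (D 0 \<omega>))"
  define g where "g k = h k - c" for k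
  have g_bnd: "\<bar>g k\<bar> \<le> B + \<bar>c\<bar>" for k using bnd[of k] by (simp add: g_def)
  have "0 \<le> B" using bnd[of 0] by linarith
  have int_h: "integrable M (\<lambda>\<omega>. h (D i \<omega>))" for i
    by (rule integrable_bounded_comp_D[OF bnd])
  have int_h2: "integrable M (\<lambda>\<omega>. (h (D i \<omega>))\<^sup>2)" for i
    using bnd \<open>0 \<le> B\<close> by (intro integrable_bounded_comp_D[of _ "B\<^sup>2"])
      (auto simp: abs_le_square_iff[symmetric])
  have int_gg: "integrable M (\<lambda>\<omega>. g (D i \<omega>) * g (D j \<omega>))" for i j
    by (rule integrable_const_bound[where B="(B + \<bar>c\<bar>) * (B + \<bar>c\<bar>)"])
       (use \<open>0 \<le> B\<close> in \<open>auto simp: abs_mult intro!: mult_mono g_bnd\<close>)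
  have mean_g: "expectation (\<lambda>\<omega>. g (D i \<omega>)) = 0" for i
    using int_h[of i] expectation_comp_D[of h i] by (simp add: g_def c_def prob_space)
  have "expectation (\<lambda>\<omega>. g (D i \<omega>) * g (D j \<omega>)) = 0" if "i \<noteq> j" for i j
    using expectation_mult_comp_D[OF that integrable_bounded_comp_D[of g "B + \<bar>c\<bar>" 0, OF g_bnd]] mean_g
    by simp
  then have "expectation (\<lambda>\<omega>. (\<Sum>i<n. g (D i \<omega>))\<^sup>2) = (\<Sum>i<n. expectation (\<lambda>\<omega>. (g (D i \<omega>))\<^sup>2))"
    using int_gg by (intro expectation_square_sum_orthogonal) auto
  also have "\<dots> \<le> (\<Sum>i<n. expectation (\<lambda>\<omega>. (h (D 0 \<omega>))\<^sup>2))"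
  proof (rule sum_mono)
    fix i
    have "expectation (\<lambda>\<omega>. (g (D i \<omega>))\<^sup>2) = variance (\<lambda>\<omega>. h (D i \<omega>))"
      using expectation_comp_D[of h i] by (simp add: g_def c_def)
    also have "\<dots> = expectation (\<lambda>\<omega>. (h (D i \<omega>))\<^sup>2) - (expectation (\<lambda>\<omega>. h (D i \<omega>)))\<^sup>2"
      by (rule variance_eq[OF int_h int_h2])
    also have "\<dots> \<le> expectation (\<lambda>\<omega>. (h (D 0 \<omega>))\<^sup>2)"
      using expectation_comp_D[of "\<lambda>k. (h k)\<^sup>2" i] by simp
    finally show "expectation (\<lambda>\<omega>. (g (D i \<omega>))\<^sup>2) \<le> expectation (\<lambda>\<omega>. (h (D 0 \<omega>))\<^sup>2)" .
  qed
  finally show ?thesis by (simp add: g_def c_def)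
qed

lemma prob_ge_le_powr_moment:
  assumes "integrable M (\<lambda>\<omega>. real (D 0 \<omega>) powr p)" "0 < p" "0 < s"
  shows "prob {\<omega> \<in> space M. s \<le> real (D i \<omega>)} \<le> expectation (\<lambda>\<omega>. real (D 0 \<omega>) powr p) / s powr p"
proof -
  have "prob {\<omega> \<in> space M. s \<le> real (D i \<omega>)} = prob {\<omega> \<in> space M. s \<le> real (D 0 \<omega>)}"
    by (rule prob_comp_D)
  also have "\<dots> \<le> prob {\<omega> \<in> space M. s powr p \<le> real (D 0 \<omega>) powr p}"
    using assms by (intro finite_measure_mono) (auto intro: powr_mono2)
  also have "\<dots> \<le> expectation (\<lambda>\<omega>. real (D 0 \<omega>) powr p) / s powr p"
    using assms by (intro integral_Markov_inequality_measure[where A="space M"]) auto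
  finally show ?thesis .
qed

lemma prob_card_ge_gt_le:
  assumes "integrable M (\<lambda>\<omega>. real (D 0 \<omega>) powr p)" "0 < p" "0 < s" "0 < c"
  shows "prob {\<omega> \<in> space M. c < real (card {i. i < n \<and> s \<le> real (D i \<omega>)})}
         \<le> real n * (expectation (\<lambda>\<omega>. real (D 0 \<omega>) powr p) / s powr p) / c"
proof -
  define K where "K \<omega> = (\<Sum>i<n. indicator {\<omega> \<in> space M. s \<le> real (D i \<omega>)} \<omega> :: real)" for \<omega>
  have card_eq: "real (card {i. i < n \<and> s \<le> real (D i \<omega>)}) = K \<omega>" if "\<omega> \<in> space M" for \<omega>
  proof -
    have "{i. i < n \<and> s \<le> real (D i \<omega>)} = {..<n} \<inter> {i. s \<le> real (D i \<omega>)}" by auto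
    then have "real (card {i. i < n \<and> s \<le> real (D i \<omega>)}) = (\<Sum>i<n. of_bool (s \<le> real (D i \<omega>)))"
      by (simp only: sum_of_bool_eq finite_lessThan)
    also have "\<dots> = K \<omega>"
      unfolding K_def using that by (intro sum.cong) (auto simp: indicator_def)
    finally show ?thesis .
  qed
  have int_ind: "integrable M (indicat_real {\<omega> \<in> space M. s \<le> real (D i \<omega>)})" for i
    by (rule integrable_real_indicator) (auto simp: emeasure_eq_measure)
  have "prob {\<omega> \<in> space M. c < real (card {i. i < n \<and> s \<le> real (D i \<omega>)})} \<le> prob {\<omega> \<in> space M. c \<le> K \<omega>}"
    using card_eq by (intro finite_measure_mono) (auto simp: K_def)
  also have "\<dots> \<le> expectation K / c"
    using assms(4) int_ind unfolding K_def
    by (intro integral_Markov_inequality_measure[where A="space M"]) (auto intro: sum_nonneg)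
  also have "expectation K = (\<Sum>i<n. prob {\<omega> \<in> space M. s \<le> real (D i \<omega>)})"
    unfolding K_def using int_ind by (subst Bochner_Integration.integral_sum) auto
  also have "\<dots> \<le> (\<Sum>i<n. expectation (\<lambda>\<omega>. real (D 0 \<omega>) powr p) / s powr p)"
    by (intro sum_mono prob_ge_le_powr_moment assms)
  finally show ?thesis using assms(4) by (simp add: divide_right_mono)
qed

lemma integrable_trunc_gt:
  assumes "integrable M (\<lambda>\<omega>. real (D 0 \<omega>))"
  shows "integrable M (\<lambda>\<omega>. trunc_gt b (D i \<omega>))"
proof -
  have "integrable M (\<lambda>\<omega>. trunc_gt b (D 0 \<omega>))"
    by (rule Bochner_Integration.integrable_bound[OF assms]) (auto intro!: AE_I2 simp: trunc_gt_def)
  then show ?thesis using integrable_comp_D_iff[of "trunc_gt b" i] by simp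
qed

lemma expectation_trunc_gt_le:
  assumes mp: "integrable M (\<lambda>\<omega>. real (D 0 \<omega>) powr p)" and "1 \<le> p" "0 < b"
  shows "expectation (\<lambda>\<omega>. trunc_gt b (D 0 \<omega>)) \<le> expectation (\<lambda>\<omega>. real (D 0 \<omega>) powr p) * b powr (1 - p)"
proof -
  have "integrable M (\<lambda>\<omega>. real (D 0 \<omega>))"
    using integrable_of_powr_moment[OF D_measurable mp \<open>1 \<le> p\<close>] .
  then have "expectation (\<lambda>\<omega>. trunc_gt b (D 0 \<omega>)) \<le> expectation (\<lambda>\<omega>. real (D 0 \<omega>) powr p * b powr (1 - p))"
    using mp assms trunc_gt_le_powr by (intro integral_mono integrable_trunc_gt) auto
  then show ?thesis by simp
qed

lemma prob_sum_trunc_gt_ge_le: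
  assumes mp: "integrable M (\<lambda>\<omega>. real (D 0 \<omega>) powr p)" and "1 \<le> p" "0 < b" "0 < x"
  shows "prob {\<omega> \<in> space M. x \<le> (\<Sum>i<n. trunc_gt b (D i \<omega>))}
         \<le> real n * (expectation (\<lambda>\<omega>. real (D 0 \<omega>) powr p) * b powr (1 - p)) / x"
proof -
  have int: "integrable M (\<lambda>\<omega>. trunc_gt b (D i \<omega>))" for i
    using integrable_of_powr_moment[OF D_measurable mp \<open>1 \<le> p\<close>] by (rule integrable_trunc_gt)
  have "prob {\<omega> \<in> space M. x \<le> (\<Sum>i<n. trunc_gt b (D i \<omega>))}
      \<le> expectation (\<lambda>\<omega>. \<Sum>i<n. trunc_gt b (D i \<omega>)) / x"
    using assms(4) int
    by (intro integral_Markov_inequality_measure[where A="space M"]) (auto intro: sum_nonneg trunc_gt_nonneg)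
  also have "expectation (\<lambda>\<omega>. \<Sum>i<n. trunc_gt b (D i \<omega>)) = (\<Sum>i<n. expectation (\<lambda>\<omega>. trunc_gt b (D i \<omega>)))"
    by (rule Bochner_Integration.integral_sum) (rule int)
  also have "\<dots> = (\<Sum>i<n. expectation (\<lambda>\<omega>. trunc_gt b (D 0 \<omega>)))"
    by (rule sum.cong[OF refl expectation_comp_D])
  also have "\<dots> = real n * expectation (\<lambda>\<omega>. trunc_gt b (D 0 \<omega>))"
    by simp
  also have "\<dots> \<le> real n * (expectation (\<lambda>\<omega>. real (D 0 \<omega>) powr p) * b powr (1 - p))"
    using expectation_trunc_gt_le[OF assms(1-3)] by (intro mult_left_mono) auto
  finally show ?thesis using assms(4) by (simp add: divide_right_mono)
qed

lemma expectation_trunc_le_square_le: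
  assumes int: "integrable M (\<lambda>\<omega>. real (D 0 \<omega>))" and b: "0 < b"
  shows "expectation (\<lambda>\<omega>. (trunc_le b (D 0 \<omega>))\<^sup>2) \<le> b * expectation (\<lambda>\<omega>. real (D 0 \<omega>))"
proof -
  have "(trunc_le b k)\<^sup>2 \<le> b\<^sup>2" for k
    using abs_trunc_le_le[of b k] abs_le_square_iff[of "trunc_le b k" b] b by simp
  then have "integrable M (\<lambda>\<omega>. (trunc_le b (D 0 \<omega>))\<^sup>2)"
    by (intro integrable_bounded_comp_D[of _ "b\<^sup>2"]) simp
  then have "expectation (\<lambda>\<omega>. (trunc_le b (D 0 \<omega>))\<^sup>2) \<le> expectation (\<lambda>\<omega>. b * real (D 0 \<omega>))"
    using int b trunc_le_square_le by (intro integral_mono) simp_all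
  then show ?thesis by simp
qed

lemma prob_centered_sum_trunc_le_ge_le:
  assumes int: "integrable M (\<lambda>\<omega>. real (D 0 \<omega>))" and b: "0 < b" and x: "0 < x"
  shows "prob {\<omega> \<in> space M. x \<le> \<bar>\<Sum>i<n. trunc_le b (D i \<omega>) - expectation (\<lambda>\<omega>. trunc_le b (D 0 \<omega>))\<bar>}
         \<le> real n * (b * expectation (\<lambda>\<omega>. real (D 0 \<omega>))) / x\<^sup>2"
proof -
  define c where "c = expectation (\<lambda>\<omega>. trunc_le b (D 0 \<omega>))"
  define f where "f \<omega> = (\<Sum>i<n. trunc_le b (D i \<omega>) - c)" for \<omega>
  define B where "B = real n * (b + \<bar>c\<bar>)"
  have bnd: "\<bar>trunc_le b k\<bar> \<le> b" for k using abs_trunc_le_le b by simp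
  have f_meas[measurable]: "f \<in> borel_measurable M" unfolding f_def by measurable
  have "\<bar>f \<omega>\<bar> \<le> B" for \<omega>
  proof -
    have "\<bar>f \<omega>\<bar> \<le> (\<Sum>i<n. \<bar>trunc_le b (D i \<omega>) - c\<bar>)" unfolding f_def by (rule sum_abs)
    also have "\<dots> \<le> (\<Sum>i<n. b + \<bar>c\<bar>)"
      by (intro sum_mono order.trans[OF abs_triangle_ineq4] add_right_mono bnd)
    finally show ?thesis by (simp add: B_def)
  qed
  then have "(f \<omega>)\<^sup>2 \<le> B\<^sup>2" for \<omega>
    using abs_le_square_iff[of "f \<omega>" B] b by (simp add: B_def)
  then have "integrable M (\<lambda>\<omega>. (f \<omega>)\<^sup>2)"
    by (intro integrable_const_bound[where B="B\<^sup>2"] AE_I2) simp_all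
  then have Cheb: "prob {\<omega> \<in> space M. x \<le> \<bar>f \<omega>\<bar>} \<le> expectation (\<lambda>\<omega>. (f \<omega>)\<^sup>2) / x\<^sup>2"
    using x by (intro second_moment_method) simp_all
  have "expectation (\<lambda>\<omega>. (f \<omega>)\<^sup>2) \<le> real n * expectation (\<lambda>\<omega>. (trunc_le b (D 0 \<omega>))\<^sup>2)"
    unfolding f_def c_def by (rule expectation_centered_sum_square_le[OF bnd])
  moreover have "expectation (\<lambda>\<omega>. (trunc_le b (D 0 \<omega>))\<^sup>2) \<le> b * expectation (\<lambda>\<omega>. real (D 0 \<omega>))"
    using int b by (rule expectation_trunc_le_square_le)
  ultimately have "expectation (\<lambda>\<omega>. (f \<omega>)\<^sup>2) \<le> real n * (b * expectation (\<lambda>\<omega>. real (D 0 \<omega>)))"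
    by (meson mult_left_mono of_nat_0_le_iff order_trans)
  then have "expectation (\<lambda>\<omega>. (f \<omega>)\<^sup>2) / x\<^sup>2 \<le> real n * (b * expectation (\<lambda>\<omega>. real (D 0 \<omega>))) / x\<^sup>2"
    by (rule divide_right_mono) simp
  with Cheb show ?thesis unfolding f_def c_def by linarith
qed

lemma prob_sum_deviation_gt_le:
  fixes b p x :: real and n :: nat
  defines "\<mu> \<equiv> expectation (\<lambda>\<omega>. real (D 0 \<omega>))" and "m \<equiv> expectation (\<lambda>\<omega>. real (D 0 \<omega>) powr p)"
  assumes mp: "integrable M (\<lambda>\<omega>. real (D 0 \<omega>) powr p)" and p: "1 \<le> p" and b: "0 < b" and x: "0 < x"
    and bias: "real n * (m * b powr (1 - p)) \<le> x"
  shows "prob {\<omega> \<in> space M. 3 * x < \<bar>(\<Sum>l<n. real (D l \<omega>)) - \<mu> * real n\<bar>}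
         \<le> real n * (m * b powr (1 - p)) / x + real n * (b * \<mu>) / x\<^sup>2"
proof -
  define c where "c = expectation (\<lambda>\<omega>. trunc_le b (D 0 \<omega>))"
  define e where "e = expectation (\<lambda>\<omega>. trunc_gt b (D 0 \<omega>))"
  define f where "f \<omega> = (\<Sum>i<n. trunc_le b (D i \<omega>) - c)" for \<omega>
  define g where "g \<omega> = (\<Sum>i<n. trunc_gt b (D i \<omega>))" for \<omega>
  have int: "integrable M (\<lambda>\<omega>. real (D 0 \<omega>))"
    by (rule integrable_of_powr_moment[OF D_measurable mp p])
  have "\<mu> = c + e"
  proof -
    have "integrable M (\<lambda>\<omega>. trunc_le b (D 0 \<omega>))"
      using b abs_trunc_le_le by (intro integrable_bounded_comp_D[of _ b]) auto
    then show ?thesis using integrable_trunc_gt[OF int]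
      by (simp add: \<mu>_def c_def e_def trunc_le_plus_trunc_gt[of b, symmetric])
  qed
  then have split: "(\<Sum>l<n. real (D l \<omega>)) - \<mu> * real n = f \<omega> + g \<omega> - real n * e" for \<omega>
    by (simp add: f_def g_def trunc_le_plus_trunc_gt[of b, symmetric] sum.distrib sum_subtractf
        algebra_simps)
  have "0 \<le> e" unfolding e_def by (intro integral_nonneg_AE) (simp add: trunc_gt_nonneg)
  moreover have "e \<le> m * b powr (1 - p)"
    unfolding e_def m_def by (rule expectation_trunc_gt_le[OF mp p b])
  ultimately have "0 \<le> real n * e" "real n * e \<le> x"
    using bias by (auto intro: order.trans[OF mult_left_mono])
  moreover have "0 \<le> g \<omega>" for \<omega> unfolding g_def by (intro sum_nonneg) (simp add: trunc_gt_nonneg)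
  ultimately have "x \<le> \<bar>f \<omega>\<bar> \<or> x \<le> g \<omega>" if "3 * x < \<bar>f \<omega> + g \<omega> - real n * e\<bar>" for \<omega>
    using that by (smt (verit))
  then have "{\<omega> \<in> space M. 3 * x < \<bar>(\<Sum>l<n. real (D l \<omega>)) - \<mu> * real n\<bar>}
      \<subseteq> {\<omega> \<in> space M. x \<le> \<bar>f \<omega>\<bar>} \<union> {\<omega> \<in> space M. x \<le> g \<omega>}"
    unfolding split by blast
  then have "prob {\<omega> \<in> space M. 3 * x < \<bar>(\<Sum>l<n. real (D l \<omega>)) - \<mu> * real n\<bar>}
      \<le> prob {\<omega> \<in> space M. x \<le> \<bar>f \<omega>\<bar>} + prob {\<omega> \<in> space M. x \<le> g \<omega>}"
    by (intro order.trans[OF finite_measure_mono measure_Un_le]) (auto simp: f_def g_def)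
  also have "\<dots> \<le> real n * (b * \<mu>) / x\<^sup>2 + real n * (m * b powr (1 - p)) / x"
    unfolding f_def g_def c_def \<mu>_def m_def
    by (intro add_mono prob_centered_sum_trunc_le_ge_le prob_sum_trunc_gt_ge_le int mp p b x)
  finally show ?thesis by simp
qed

lemma prob_sum_deviation_tendsto_zero:
  fixes p \<theta> \<alpha> :: real
  defines "\<mu> \<equiv> expectation (\<lambda>\<omega>. real (D 0 \<omega>))"
  assumes mp: "integrable M (\<lambda>\<omega>. real (D 0 \<omega>) powr p)" and p: "1 < p" and \<mu>: "0 < \<mu>"
    and \<theta>: "\<theta> < \<alpha> * (p - 1)" "\<alpha> < 1 - 2 * \<theta>"
  shows "(\<lambda>n. prob {\<omega> \<in> space M. \<mu> * real n powr (1 - \<theta>) < \<bar>(\<Sum>l<n. real (D l \<omega>)) - \<mu> * real n\<bar>})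
         \<longlonglongrightarrow> 0"
proof -
  define m where "m = expectation (\<lambda>\<omega>. real (D 0 \<omega>) powr p)"
  define x where "x n = \<mu> * real n powr (1 - \<theta>) / 3" for n :: nat
  define b where "b n = real n powr \<alpha>" for n :: nat
  define bias where "bias n = real n * (m * b n powr (1 - p)) / x n" for n
  define var where "var n = real n * (b n * \<mu>) / (x n)\<^sup>2" for n
  have bias: "bias \<longlonglongrightarrow> 0"
    unfolding bias_def b_def x_def using \<mu> \<theta>(1) by (rule tendsto_truncation_bias_bound)
  have var: "var \<longlonglongrightarrow> 0"
    unfolding var_def b_def x_def using \<mu> \<theta>(2) by (rule tendsto_truncation_variance_bound)
  have "\<forall>\<^sub>F n in sequentially.
      prob {\<omega> \<in> space M. \<mu> * real n powr (1 - \<theta>) < \<bar>(\<Sum>l<n. real (D l \<omega>)) - \<mu> * real n\<bar>}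
      \<le> bias n + var n"
    using eventually_gt_at_top[of 0] order_tendstoD(2)[OF bias zero_less_one]
  proof eventually_elim
    case (elim n)
    have x: "0 < x n" and "0 < b n" using elim \<mu> by (simp_all add: x_def b_def)
    moreover have "real n * (m * b n powr (1 - p)) \<le> x n"
      using elim x by (simp add: bias_def divide_less_eq)
    ultimately show ?case
      using prob_sum_deviation_gt_le[OF mp _ _ x, where n=n and b="b n"] p
      by (simp add: x_def bias_def var_def m_def \<mu>_def)
  qed
  then show ?thesis
    by (intro tendsto_sandwich[OF _ _ tendsto_const tendsto_add_zero[OF bias var]])
      (simp_all only: measure_nonneg eventually_True)
qed

lemma prob_card_large_tendsto_zero:
  fixes p q \<mu> \<epsilon> :: real
  assumes mp: "integrable M (\<lambda>\<omega>. real (D 0 \<omega>) powr p)" and "0 < p" "0 < \<mu>" "0 < \<epsilon>" "1 - p / 2 < q"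
  shows "(\<lambda>n. prob {\<omega> \<in> space M.
            real n powr q < real (card {i. i < n \<and> \<epsilon> * sqrt (\<mu> * real n) \<le> real (D i \<omega>)})}) \<longlonglongrightarrow> 0"
proof -
  define m where "m = expectation (\<lambda>\<omega>. real (D 0 \<omega>) powr p)"
  have bound: "\<forall>\<^sub>F n in sequentially.
      prob {\<omega> \<in> space M. real n powr q < real (card {i. i < n \<and> \<epsilon> * sqrt (\<mu> * real n) \<le> real (D i \<omega>)})}
      \<le> real n * (m / (\<epsilon> * sqrt (\<mu> * real n)) powr p) / real n powr q"
    using eventually_gt_at_top[of 0]
  proof eventually_elim
    case (elim n)
    show ?case unfolding m_def using elim assms by (intro prob_card_ge_gt_le) auto
  qed
  have lim: "(\<lambda>n. real n * (m / (\<epsilon> * sqrt (\<mu> * real n)) powr p) / real n powr q) \<longlonglongrightarrow> 0"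
    using assms by (intro tendsto_count_bound) auto
  show ?thesis
    by (rule tendsto_sandwich[OF _ bound tendsto_const lim]) (simp only: measure_nonneg eventually_True)
qed

lemma kernel_diff_sum_conv_prob_zero:
  fixes p \<theta> \<alpha> q c \<epsilon> :: real
  defines "\<mu> \<equiv> expectation (\<lambda>\<omega>. real (D 0 \<omega>))"
  assumes mp: "integrable M (\<lambda>\<omega>. real (D 0 \<omega>) powr p)" and p: "1 < p" and \<mu>: "0 < \<mu>"
    and \<epsilon>: "0 < \<epsilon>" and \<theta>: "0 < \<theta>" "\<theta> < \<alpha> * (p - 1)" "\<alpha> < 1 - 2 * \<theta>"
    and q: "1 - p / 2 < q" "c + 3 * q < \<theta>"
  shows "conv_prob_zero M (\<lambda>n \<omega>. real n powr c * \<bar>kernel_diff_sum \<mu> n \<epsilon> (\<lambda>i. real (D i \<omega>))\<bar>)"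
  unfolding conv_prob_zero_def
proof (intro allI impI)
  fix e :: real
  assume "0 < e"
  define dev where "dev n = {\<omega> \<in> space M. \<mu> * real n powr (1 - \<theta>) < \<bar>(\<Sum>l<n. real (D l \<omega>)) - \<mu> * real n\<bar>}"
    for n
  define many where "many n = {\<omega> \<in> space M.
      real n powr q < real (card {i. i < n \<and> \<epsilon> * sqrt (\<mu> * real n) \<le> real (D i \<omega>)})}" for n
  define T where "T n \<omega> = real n powr c * \<bar>kernel_diff_sum \<mu> n \<epsilon> (\<lambda>i. real (D i \<omega>))\<bar>" for n \<omega>
  have "\<forall>\<^sub>F n in sequentially. 1 * real n powr (- \<theta>) < 1 / 2"
    using \<theta> by (intro order_tendstoD(2)[OF tendsto_const_mult_powr_neg]) auto
  moreover have "\<forall>\<^sub>F n in sequentially. 6 / \<epsilon>\<^sup>2 * real n powr (c - \<theta> + 3 * q) < e"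
    using q \<open>0 < e\<close> by (intro order_tendstoD(2)[OF tendsto_const_mult_powr_neg]) auto
  ultimately have bound: "\<forall>\<^sub>F n in sequentially.
      prob {\<omega> \<in> space M. e < \<bar>T n \<omega>\<bar>} \<le> prob (dev n) + prob (many n)"
    using eventually_gt_at_top[of 0]
  proof eventually_elim
    case (elim n)
    have "\<omega> \<in> dev n \<union> many n" if "\<omega> \<in> space M" "e < \<bar>T n \<omega>\<bar>" for \<omega>
    proof (rule ccontr)
      assume "\<omega> \<notin> dev n \<union> many n"
      then have "T n \<omega> \<le> 6 / \<epsilon>\<^sup>2 * real n powr (c - \<theta> + 3 * q)"
        unfolding T_def using that(1) elim \<epsilon> \<mu>
        by (intro weighted_kernel_diff_sum_le) (auto simp: dev_def many_def not_less)
      moreover have "\<bar>T n \<omega>\<bar> = T n \<omega>" by (simp add: T_def)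
      ultimately show False using that(2) elim(2) by linarith
    qed
    then have "{\<omega> \<in> space M. e < \<bar>T n \<omega>\<bar>} \<subseteq> dev n \<union> many n" by blast
    then show ?case
      by (intro order.trans[OF finite_measure_mono measure_Un_le]) (auto simp: dev_def many_def)
  qed
  have "0 < p" using p by simp
  have lim: "(\<lambda>n. prob (dev n) + prob (many n)) \<longlonglongrightarrow> 0"
    unfolding dev_def many_def
    by (rule tendsto_add_zero[OF prob_sum_deviation_tendsto_zero[OF mp p \<mu>[unfolded \<mu>_def] \<theta>(2,3),
          folded \<mu>_def] prob_card_large_tendsto_zero[OF mp \<open>0 < p\<close> \<mu> \<epsilon> q(1)]])
  show "(\<lambda>n. prob {\<omega> \<in> space M. e < \<bar>T n \<omega>\<bar>}) \<longlonglongrightarrow> 0"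
    by (rule tendsto_sandwich[OF _ bound tendsto_const lim]) (simp only: measure_nonneg eventually_True)
qed

lemma kernel_diff_sum_conv_prob_zero_of_tail:
  fixes \<gamma> \<delta> \<epsilon> :: real and L :: "real \<Rightarrow> real"
  defines "\<mu> \<equiv> expectation (\<lambda>\<omega>. real (D 0 \<omega>))"
  assumes \<gamma>: "1 < \<gamma>" "\<gamma> < 2" and L: "slowly_varying L"
    and tail: "\<forall>t>0. prob {\<omega> \<in> space M. real (D 0 \<omega>) > t} = L t * t powr (- \<gamma>)"
    and \<epsilon>: "0 < \<epsilon>" and \<delta>: "\<delta> < (\<gamma> - 1) / (1 + \<gamma>)"
  shows "conv_prob_zero M (\<lambda>n \<omega>.
           real n powr (3 * \<gamma> / 2 - 3 + \<delta>) * \<bar>kernel_diff_sum \<mu> n \<epsilon> (\<lambda>i. real (D i \<omega>))\<bar>)"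
proof -
  obtain p \<theta> \<alpha> q where p: "1 < p" "p < \<gamma>" and \<theta>: "0 < \<theta>" "\<theta> < \<alpha> * (p - 1)" "\<alpha> < 1 - 2 * \<theta>"
    and q: "1 - p / 2 < q" "3 * \<gamma> / 2 - 3 + \<delta> + 3 * q < \<theta>"
    by (rule ex_exponents[OF \<gamma> \<delta>])
  define \<beta> where "\<beta> = (p + \<gamma>) / 2"
  have \<beta>: "0 < \<beta>" "\<beta> < \<gamma>" "p < \<beta>" using p by (auto simp: \<beta>_def)
  have antimono: "prob {\<omega> \<in> space M. real (D 0 \<omega>) > t} \<le> prob {\<omega> \<in> space M. real (D 0 \<omega>) > s}"
    if "0 < s" "s \<le> t" for s t
    using that by (intro finite_measure_mono) auto
  have "prob {\<omega> \<in> space M. real (D 0 \<omega>) > t} \<le> 1" for t by simp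
  from slowly_varying_tail_powr_bound[OF antimono this L tail[rule_format] \<beta>(1,2)]
  obtain C where "\<And>t. t > 0 \<Longrightarrow> prob {\<omega> \<in> space M. real (D 0 \<omega>) > t} \<le> C * t powr (- \<beta>)"
    by blast
  then have mp: "integrable M (\<lambda>\<omega>. real (D 0 \<omega>) powr p)"
    using p \<beta> by (intro integrable_powr_of_tail_bound[OF D_measurable]) auto
  have "0 < \<mu>"
  proof -
    have "\<forall>\<^sub>F t in at_top. 1 \<le> t \<and> 0 < L t"
      using L eventually_ge_at_top[of 1] unfolding slowly_varying_def by (auto intro: eventually_conj)
    then obtain t where t: "1 \<le> t" "0 < L t"
      unfolding eventually_at_top_linorder by auto
    have "0 < prob {\<omega> \<in> space M. real (D 0 \<omega>) > t}" using tail t by simp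
    also have "\<dots> \<le> prob {\<omega> \<in> space M. t \<le> real (D 0 \<omega>)}"
      by (intro finite_measure_mono) auto
    also have "\<dots> \<le> \<mu> / t"
      unfolding \<mu>_def using t integrable_of_powr_moment[OF D_measurable mp] p
      by (intro integral_Markov_inequality_measure[where A="space M"]) auto
    finally show ?thesis using t by (simp add: zero_less_divide_iff)
  qed
  from kernel_diff_sum_conv_prob_zero[OF mp p(1) this[unfolded \<mu>_def] \<epsilon> \<theta> q]
  show ?thesis unfolding \<mu>_def .
qed
end

theorem lemma4p4:
  fixes M :: "'a measure" and D :: "nat \<Rightarrow> 'a \<Rightarrow> nat"
    and \<gamma> \<mu> \<kappa> \<epsilon> \<delta> :: real
  assumes "prob_space M"
    and "\<And>i. D i \<in> measurable M (count_space UNIV)"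
    and "prob_space.indep_vars M (\<lambda>_. count_space UNIV) D UNIV"
    and "\<And>i. distr M (count_space UNIV) (D i) = distr M (count_space UNIV) (D 0)"
    and "1 < \<gamma>" and "\<gamma> < 2"
    and "\<exists>L. slowly_varying L \<and>
           (\<forall>t>0. measure M {\<omega> \<in> space M. real (D 0 \<omega>) > t} = L t * t powr (- \<gamma>))"
    and "\<mu> = prob_space.expectation M (\<lambda>\<omega>. real (D 0 \<omega>))"
    and "\<kappa> = (\<gamma> - 1) / (1 + \<gamma>)"
    and "\<epsilon> > 0" and "\<delta> < \<kappa>"
  shows "conv_prob_zero M (\<lambda>n \<omega>.
           real n powr (3 * \<gamma> / 2 - 3 + \<delta>) *
           \<bar>\<Sum>(i, j, k) \<in> {(i, j, k). i < j \<and> j < k \<and> k < n}.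
              tri_kernel (\<Sum>l<n. real (D l \<omega>)) \<mu> n \<epsilon>
                  (real (D i \<omega>)) (real (D j \<omega>)) (real (D k \<omega>))
            - tri_kernel (\<mu> * real n) \<mu> n \<epsilon>
                  (real (D i \<omega>)) (real (D j \<omega>)) (real (D k \<omega>))\<bar>)"
proof -
  interpret iid_nat_seq M D
    using assms(1-4) by (simp add: iid_nat_seq_def iid_nat_seq_axioms_def)
  from assms(7) obtain L where "slowly_varying L"
    and "\<forall>t>0. prob {\<omega> \<in> space M. real (D 0 \<omega>) > t} = L t * t powr (- \<gamma>)"
    by blast
  from kernel_diff_sum_conv_prob_zero_of_tail[OF assms(5,6) this assms(10) assms(11)[unfolded assms(9)]]
  show ?thesis unfolding assms(8) kernel_diff_sum_def .
qed

end
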